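(* For every program $\Pi$ with nested expressions, a set $X$ of atoms is a stable model of $\Pi$ (as a theory, in the sense defined below) if and only if $X$ is a stable model of $\Pi$ in the sense of Lifschitz, Tang and Turner (1999), i.e. iff $X$ is a minimal (with respect to set inclusion) set of atoms satisfying $\Pi^{\underline X}$.
   Context: Fix a set of propositional atoms. Formulas are built from atoms and $\bot$ using the binary connectives $\wedge,\vee,\to$; $\top$ abbreviates $\bot\to\bot$, $\neg F$ abbreviates $F\to\bot$. A theory is a set of formulas; $X\models F$ denotes classical satisfaction by the set of atoms $X$. The reduct $F^X$: $\bot^X=\bot$; for an atom $a$, $a^X=a$ if $a\in X$ and $\bot$ otherwise; for $\otimes\in\{\wedge,\vee,\to\}$, $(F\otimes G)^X=F^X\otimes G^X$ if $X\models F\otimes G$, and $\bot$ otherwise; $\Gamma^X=\{F^X:F\in\Gamma\}$. $X$ is a stable model of a theory $\Gamma$ if $X\models\Gamma^X$ and no proper subset of $X$ satisfies $\Gamma^X$. A nested expression is a formula containing no implications other than those of the form $\neg F$ or $\top$. A program with nested expressions is a set of rules $F\leftarrow G$ (identified with $G\to F$) where $F,G$ are nested expressions. The reduct $\Pi^{\underline X}$ is obtained from $\Pi$ by replacing, in each rule, each maximal subformula of the form $\neg F$ by $\top$ if $X\models\neg F$ and by $\bot$ otherwise. *)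

theory Defs
  imports Main
begin

datatype 'a form = Bot | Atom 'a | And "'a form" "'a form" | Or "'a form" "'a form"
  | Imp "'a form" "'a form"

definition Top :: "'a form" where "Top = Imp Bot Bot"
definition Neg :: "'a form \<Rightarrow> 'a form" where "Neg F = Imp F Bot"

fun sat :: "'a set \<Rightarrow> 'a form \<Rightarrow> bool" where
  "sat X Bot = False"
| "sat X (Atom a) = (a \<in> X)"
| "sat X (And F G) = (sat X F \<and> sat X G)"
| "sat X (Or F G) = (sat X F \<or> sat X G)"
| "sat X (Imp F G) = (sat X F \<longrightarrow> sat X G)"

definition sat_theory :: "'a set \<Rightarrow> 'a form set \<Rightarrow> bool" where
  "sat_theory X \<Gamma> = (\<forall>F\<in>\<Gamma>. sat X F)"

fun reduct :: "'a set \<Rightarrow> 'a form \<Rightarrow> 'a form" where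
  "reduct X Bot = Bot"
| "reduct X (Atom a) = (if a \<in> X then Atom a else Bot)"
| "reduct X (And F G) = (if sat X (And F G) then And (reduct X F) (reduct X G) else Bot)"
| "reduct X (Or F G) = (if sat X (Or F G) then Or (reduct X F) (reduct X G) else Bot)"
| "reduct X (Imp F G) = (if sat X (Imp F G) then Imp (reduct X F) (reduct X G) else Bot)"

definition reduct_theory :: "'a set \<Rightarrow> 'a form set \<Rightarrow> 'a form set" where
  "reduct_theory X \<Gamma> = reduct X ` \<Gamma>"

definition stable_model :: "'a set \<Rightarrow> 'a form set \<Rightarrow> bool" where
  "stable_model X \<Gamma> = (sat_theory X (reduct_theory X \<Gamma>) \<and>
     (\<forall>Y. Y \<subset> X \<longrightarrow> \<not> sat_theory Y (reduct_theory X \<Gamma>)))"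

text \<open>Nested expressions: the only implications are of the form Neg F (which includes
  Top = Neg Bot), with F itself a nested expression.\<close>
fun nested :: "'a form \<Rightarrow> bool" where
  "nested Bot = True"
| "nested (Atom a) = True"
| "nested (And F G) = (nested F \<and> nested G)"
| "nested (Or F G) = (nested F \<and> nested G)"
| "nested (Imp F G) = (G = Bot \<and> nested F)"

text \<open>A rule F <- G is represented by the pair (F, G) (head, body); it is identified
  with the formula G \<rightarrow> F.\<close>
type_synonym 'a rule = "'a form \<times> 'a form"

definition rule_formula :: "'a rule \<Rightarrow> 'a form" where
  "rule_formula r = Imp (snd r) (fst r)"

definition nested_program :: "'a rule set \<Rightarrow> bool" where
  "nested_program \<Pi> = (\<forall>(F, G)\<in>\<Pi>. nested F \<and> nested G)"

definition program_theory :: "'a rule set \<Rightarrow> 'a form set" where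
  "program_theory \<Pi> = rule_formula ` \<Pi>"

fun ltt :: "'a set \<Rightarrow> 'a form \<Rightarrow> 'a form" where
  "ltt X Bot = Bot"
| "ltt X (Atom a) = Atom a"
| "ltt X (And F G) = And (ltt X F) (ltt X G)"
| "ltt X (Or F G) = Or (ltt X F) (ltt X G)"
| "ltt X (Imp F G) = (if G = Bot then (if sat X (Neg F) then Top else Bot)
                      else Imp (ltt X F) (ltt X G))"

definition ltt_reduct :: "'a set \<Rightarrow> 'a rule set \<Rightarrow> 'a rule set" where
  "ltt_reduct X \<Pi> = (\<lambda>(F, G). (ltt X F, ltt X G)) ` \<Pi>"

definition ltt_stable_model :: "'a set \<Rightarrow> 'a rule set \<Rightarrow> bool" where
  "ltt_stable_model X \<Pi> =
     (sat_theory X (program_theory (ltt_reduct X \<Pi>)) \<and>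
      (\<forall>Y. Y \<subset> X \<longrightarrow> \<not> sat_theory Y (program_theory (ltt_reduct X \<Pi>))))"

end

theory Submission
  imports Defs
begin

text \<open>
  Fix a set of atoms X and a subset Y of X.  For a nested expression F the
  formula reduct F^X and the Lifschitz-Tang-Turner reduct of F agree on Y as long as X
  satisfies F: Y satisfies F^X iff X satisfies F and Y satisfies the LTT reduct of F.
  This rests on two facts about the LTT reduct of a nested expression: X satisfies it iff
  X satisfies F, and it is monotone (its only implications are the constants Top and Bot).
  Lifting this to rules G -> F, the two reducts of a program are satisfied by the same
  subsets Y of X whenever X is a model of the program; X itself satisfies either reduct
  iff it is a model of the program.  Both notions of stable model therefore say the same:
  X is a model of the program and no proper subset of X satisfies the (common) reduct.
\<close>

lemma sat_reduct_self: "sat X (reduct X F) \<longleftrightarrow> sat X F"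
  by (induction F) auto

lemma sat_ltt_self: "nested F \<Longrightarrow> sat X (ltt X F) \<longleftrightarrow> sat X F"
  by (induction F) (auto simp: Top_def Neg_def)

text \<open>The LTT reduct of a nested expression is positive, hence monotone in the interpretation.\<close>
lemma sat_ltt_mono:
  "nested F \<Longrightarrow> Y \<subseteq> Z \<Longrightarrow> sat Y (ltt X F) \<Longrightarrow> sat Z (ltt X F)"
  by (induction F) (auto simp: Top_def Neg_def split: if_splits)

lemma sat_ltt_subset_imp_sat:
  assumes "nested F" "Y \<subseteq> X" "sat Y (ltt X F)"
  shows "sat X F"
  using sat_ltt_mono[OF assms] sat_ltt_self[OF assms(1)] by blast

lemma sat_reduct_nested:
  "nested F \<Longrightarrow> Y \<subseteq> X \<Longrightarrow> sat Y (reduct X F) \<longleftrightarrow> sat X F \<and> sat Y (ltt X F)"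
proof (induction F)
  case (Or F G)
  then show ?case
    using sat_ltt_subset_imp_sat[of F Y X] sat_ltt_subset_imp_sat[of G Y X] by auto
next
  case (Imp F G)
  then show ?case by (auto simp: Top_def Neg_def)
qed auto

lemma sat_reduct_rule:
  assumes "nested F" "nested G" "Y \<subseteq> X" "sat X (Imp G F)"
  shows "sat Y (reduct X (Imp G F)) \<longleftrightarrow> sat Y (Imp (ltt X G) (ltt X F))"
  using assms sat_reduct_nested[of F Y X] sat_reduct_nested[of G Y X]
    sat_ltt_subset_imp_sat[of G Y X]
  by auto

lemma sat_reduct_program:
  "sat_theory Y (reduct_theory X (program_theory \<Pi>)) \<longleftrightarrow>
     (\<forall>(F, G)\<in>\<Pi>. sat Y (reduct X (Imp G F)))"
  by (auto simp: sat_theory_def reduct_theory_def program_theory_def rule_formula_def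
      simp del: sat.simps reduct.simps)

lemma sat_ltt_reduct_program:
  "sat_theory Y (program_theory (ltt_reduct X \<Pi>)) \<longleftrightarrow>
     (\<forall>(F, G)\<in>\<Pi>. sat Y (Imp (ltt X G) (ltt X F)))"
  by (auto simp: sat_theory_def ltt_reduct_def program_theory_def rule_formula_def
      simp del: sat.simps)

lemma sat_program:
  "sat_theory X (program_theory \<Pi>) \<longleftrightarrow> (\<forall>(F, G)\<in>\<Pi>. sat X (Imp G F))"
  by (auto simp: sat_theory_def program_theory_def rule_formula_def simp del: sat.simps)

lemma sat_reduct_theory_self:
  "sat_theory X (reduct_theory X \<Gamma>) \<longleftrightarrow> sat_theory X \<Gamma>"
  by (simp add: sat_theory_def reduct_theory_def sat_reduct_self)

lemma sat_ltt_reduct_self: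
  assumes "nested_program \<Pi>"
  shows "sat_theory X (program_theory (ltt_reduct X \<Pi>)) \<longleftrightarrow> sat_theory X (program_theory \<Pi>)"
proof -
  have "sat X (Imp (ltt X G) (ltt X F)) \<longleftrightarrow> sat X (Imp G F)" if "(F, G) \<in> \<Pi>" for F G
    using assms that sat_ltt_self[of F X] sat_ltt_self[of G X]
    by (auto simp: nested_program_def)
  then show ?thesis
    unfolding sat_ltt_reduct_program sat_program[of X \<Pi>] by (auto simp del: sat.simps)
qed

lemma sat_reducts_agree:
  assumes "nested_program \<Pi>" "Y \<subseteq> X" "sat_theory X (program_theory \<Pi>)"
  shows "sat_theory Y (reduct_theory X (program_theory \<Pi>)) \<longleftrightarrow>
         sat_theory Y (program_theory (ltt_reduct X \<Pi>))"
proof -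
  have "sat Y (reduct X (Imp G F)) \<longleftrightarrow> sat Y (Imp (ltt X G) (ltt X F))"
    if rule: "(F, G) \<in> \<Pi>" for F G
  proof -
    have "nested F" "nested G"
      using assms(1) rule by (auto simp: nested_program_def)
    moreover have "sat X (Imp G F)"
      using assms(3) rule by (auto simp: sat_program simp del: sat.simps)
    ultimately show ?thesis
      by (intro sat_reduct_rule assms(2))
  qed
  then show ?thesis
    unfolding sat_reduct_program sat_ltt_reduct_program by (auto simp del: sat.simps reduct.simps)
qed

theorem proposition2:
  fixes \<Pi> :: "'a rule set" and X :: "'a set"
  assumes "nested_program \<Pi>"
  shows "stable_model X (program_theory \<Pi>) \<longleftrightarrow> ltt_stable_model X \<Pi>"
proof -
  let ?reduct = "reduct_theory X (program_theory \<Pi>)"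
  and ?ltt = "program_theory (ltt_reduct X \<Pi>)"
  have same_models_at_X: "sat_theory X ?reduct \<longleftrightarrow> sat_theory X ?ltt"
    using sat_reduct_theory_self sat_ltt_reduct_self[OF assms] by blast
  have same_models_below_X:
    "sat_theory Y ?reduct \<longleftrightarrow> sat_theory Y ?ltt" if "Y \<subset> X" "sat_theory X ?reduct" for Y
    using sat_reducts_agree[OF assms psubset_imp_subset[OF that(1)]] that(2)
    by (simp add: sat_reduct_theory_self)
  show ?thesis
  proof (cases "sat_theory X ?reduct")
    case True
    then show ?thesis
      using same_models_at_X same_models_below_X
      by (simp add: stable_model_def ltt_stable_model_def)
  next
    case False
    then show ?thesis
      using same_models_at_X by (simp add: stable_model_def ltt_stable_model_def)
  qed
qed

end
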